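(* For every $w_0\in M_N(\mathbb C)$, the Hamilton equation $$\dot w=|w|^q-|w^*|^q,\qquad w(0)=w_0$$ has a unique continuously differentiable solution $w:\mathbb R\to M_N(\mathbb C)$, defined for all $t\in\mathbb R$.
   Context: $p=2n\ge2$ is a fixed even integer and $q=p/(p-1)$. For $x\in M_N(\mathbb C)$, $|x|=(x^*x)^{1/2}$ and $|x^*|=(xx^* )^{1/2}$ (positive square roots), and $|x|^q$ is defined by functional calculus. *)

theory Defs
  imports "HOL-Analysis.Analysis"
begin

text \<open>Matrices in M_N(C) are represented as complex^'n^'n, with N = CARD('n).\<close>

definition mat_adj :: "complex^'n^'n \<Rightarrow> complex^'n^'n" where
  "mat_adj A = (\<chi> i j. cnj (A $ j $ i))"

definition mat_diag :: "('n \<Rightarrow> real) \<Rightarrow> complex^'n^'n" where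
  "mat_diag d = (\<chi> i j. if i = j then complex_of_real (d i) else 0)"

definition unitary_mat :: "complex^'n^'n \<Rightarrow> bool" where
  "unitary_mat U \<longleftrightarrow> mat_adj U ** U = mat 1 \<and> U ** mat_adj U = mat 1"

definition psd_pow :: "complex^'n^'n \<Rightarrow> real \<Rightarrow> complex^'n^'n" where
  "psd_pow H r = (SOME B. \<exists>U d. unitary_mat U \<and> (\<forall>i. d i \<ge> 0) \<and>
       H = U ** mat_diag d ** mat_adj U \<and>
       B = U ** mat_diag (\<lambda>i. d i powr r) ** mat_adj U)"

definition mat_abs :: "complex^'n^'n \<Rightarrow> complex^'n^'n" where
  "mat_abs x = psd_pow (mat_adj x ** x) (1/2)"

definition ham_field :: "real \<Rightarrow> complex^'n^'n \<Rightarrow> complex^'n^'n" where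
  "ham_field q w = psd_pow (mat_abs w) q - psd_pow (mat_abs (mat_adj w)) q"

end

theory Submission
  imports Defs
begin

text \<open>The field \<open>F(w) = |w|\<^sup>q - |w\<^sup>*|\<^sup>q\<close> is locally Lipschitz and tangent to the spheres of the
  Frobenius norm.  If \<open>x\<^sup>*x = V diag(s\<^sup>2) V\<^sup>*\<close> and \<open>y\<^sup>*y = Q diag(t\<^sup>2) Q\<^sup>*\<close>, then
  \<open>\<parallel>f(|x|) - f(|y|)\<parallel>\<^sub>2\<^sup>2 = \<Sum>\<^sub>i\<^sub>j (f(s\<^sub>i) - f(t\<^sub>j))\<^sup>2 |(V\<^sup>*Q)\<^sub>i\<^sub>j|\<^sup>2\<close>, and for \<open>f = id\<close> Bessel's
  inequality bounds this sum by \<open>2\<parallel>x - y\<parallel>\<^sub>2\<^sup>2\<close>; as \<open>t \<mapsto> t\<^sup>q\<close> is Lipschitz on bounded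
  intervals for \<open>q \<ge> 1\<close>, the same estimate holds for \<open>|x|\<^sup>q\<close> on bounded sets.  Moreover
  \<open>|w\<^sup>*|\<^sup>q w = w |w|\<^sup>q\<close>, so \<open>Re tr(F(w)\<^sup>* w) = 0\<close> and every solution stays on the sphere
  \<open>\<parallel>w\<parallel> = \<parallel>w\<^sub>0\<parallel>\<close>.  There \<open>F\<close> agrees with its composition with the metric projection onto the
  ball, a globally Lipschitz and bounded field, for which Picard iteration in a weighted
  sup-norm gives exactly one solution on all of \<open>\<real>\<close>.\<close>

section \<open>Adjoint, trace and Frobenius norm\<close>

lemma mat_adj_nth [simp]: "mat_adj A $ i $ j = cnj (A $ j $ i)"
  by (simp add: mat_adj_def)

lemma mat_adj_mat_adj [simp]: "mat_adj (mat_adj A) = A"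
  by (simp add: vec_eq_iff)

lemma matrix_matrix_mult_nth: "(A ** B) $ i $ j = (\<Sum>k\<in>UNIV. A $ i $ k * B $ k $ j)"
  by (simp add: matrix_matrix_mult_def)

lemma mat_adj_mult: "mat_adj (A ** B) = mat_adj B ** mat_adj A"
  by (simp add: vec_eq_iff matrix_matrix_mult_nth mult.commute)

lemma mat_adj_diff [simp]: "mat_adj (A - B) = mat_adj A - mat_adj B"
  by (simp add: vec_eq_iff)

lemma mat_adj_mat_1 [simp]: "mat_adj (mat 1) = mat 1"
  by (simp add: vec_eq_iff mat_def)

lemma mat_diag_nth [simp]: "mat_diag d $ i $ j = (if i = j then complex_of_real (d i) else 0)"
  by (simp add: mat_diag_def)

lemma mat_adj_mat_diag [simp]: "mat_adj (mat_diag d) = mat_diag d"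
  by (simp add: vec_eq_iff)

lemma mat_diag_mult_nth [simp]: "(mat_diag d ** A) $ i $ j = d i * A $ i $ j"
proof -
  have "(mat_diag d ** A) $ i $ j = (\<Sum>k\<in>UNIV. if k = i then d i * A $ i $ j else 0)"
    unfolding matrix_matrix_mult_nth by (intro sum.cong) auto
  thus ?thesis by simp
qed

lemma mult_mat_diag_nth [simp]: "(A ** mat_diag d) $ i $ j = A $ i $ j * d j"
proof -
  have "(A ** mat_diag d) $ i $ j = (\<Sum>k\<in>UNIV. if k = j then A $ i $ j * d j else 0)"
    unfolding matrix_matrix_mult_nth by (intro sum.cong) auto
  thus ?thesis by simp
qed

lemma mat_diag_mult_mat_diag: "mat_diag a ** mat_diag b = mat_diag (\<lambda>i. a i * b i)"
  by (simp add: vec_eq_iff)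

lemma matrix_diff_ldistrib:
  fixes A :: "'a::comm_ring_1^'n^'n" shows "A ** (B - C) = A ** B - A ** C"
  by (simp add: vec_eq_iff matrix_matrix_mult_nth algebra_simps sum_subtractf)

lemma matrix_diff_rdistrib:
  fixes A :: "'a::comm_ring_1^'n^'n" shows "(A - B) ** C = A ** C - B ** C"
  by (simp add: vec_eq_iff matrix_matrix_mult_nth algebra_simps sum_subtractf)

lemma mat_adj_mult_self_nth_diag:
  fixes M :: "complex^'n^'n"
  shows "(mat_adj M ** M) $ j $ j = complex_of_real (\<Sum>i\<in>UNIV. (cmod (M $ i $ j))\<^sup>2)"
proof -
  have "(mat_adj M ** M) $ j $ j = (\<Sum>i\<in>UNIV. complex_of_real ((cmod (M $ i $ j))\<^sup>2))"
    unfolding matrix_matrix_mult_nth mat_adj_nth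
    by (rule sum.cong[OF refl]) (simp add: complex_norm_square mult.commute del: of_real_power)
  also have "\<dots> = complex_of_real (\<Sum>i\<in>UNIV. (cmod (M $ i $ j))\<^sup>2)"
    by (rule of_real_sum[symmetric])
  finally show ?thesis .
qed

lemma mult_mat_adj_self_nth_diag:
  fixes M :: "complex^'n^'n"
  shows "(M ** mat_adj M) $ i $ i = complex_of_real (\<Sum>j\<in>UNIV. (cmod (M $ i $ j))\<^sup>2)"
  using mat_adj_mult_self_nth_diag[of "mat_adj M" i] by simp

lemma power2_norm_matrix:
  fixes A :: "complex^'n^'n"
  shows "(norm A)\<^sup>2 = (\<Sum>i\<in>UNIV. \<Sum>j\<in>UNIV. (cmod (A $ i $ j))\<^sup>2)"
proof -
  have e: "(norm x)\<^sup>2 = (\<Sum>i\<in>UNIV. (norm (x $ i))\<^sup>2)" for x :: "'b::real_normed_vector^'m"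
    unfolding norm_vec_def L2_set_def by (rule real_sqrt_pow2) (simp add: sum_nonneg)
  show ?thesis unfolding e by simp
qed

lemma inner_matrix_eq_trace:
  fixes A B :: "complex^'n^'n"
  shows "inner A B = Re (trace (mat_adj B ** A))"
  unfolding inner_vec_def trace_def matrix_matrix_mult_nth
  by (subst sum.swap) (simp add: Re_sum inner_complex_def mult.commute)

lemma power2_norm_matrix_eq_trace:
  fixes A :: "complex^'n^'n"
  shows "(norm A)\<^sup>2 = Re (trace (mat_adj A ** A))"
  by (simp add: power2_norm_eq_inner inner_matrix_eq_trace)

lemma norm_mat_adj [simp]: "norm (mat_adj A) = norm A"
proof -
  have "(norm (mat_adj A))\<^sup>2 = (norm A)\<^sup>2"
    by (simp only: power2_norm_matrix mat_adj_nth complex_mod_cnj) (rule sum.swap)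
  thus ?thesis by (simp add: power2_eq_iff_nonneg)
qed

lemma power2_norm_eq_sum_singular_values:
  fixes A :: "complex^'n^'n"
  assumes "mat_adj A ** A = mat_diag (\<lambda>i. (s i)\<^sup>2)"
  shows "(norm A)\<^sup>2 = (\<Sum>i\<in>UNIV. (s i)\<^sup>2)"
  using assms by (simp add: power2_norm_matrix_eq_trace trace_def)

lemma unitary_matD:
  "unitary_mat U \<Longrightarrow> mat_adj U ** U = mat 1"
  "unitary_mat U \<Longrightarrow> U ** mat_adj U = mat 1"
  by (auto simp: unitary_mat_def)

lemma unitary_mat_adj: "unitary_mat U \<Longrightarrow> unitary_mat (mat_adj U)"
  by (simp add: unitary_mat_def)

lemma unitary_mat_mult:
  assumes U: "unitary_mat U" and V: "unitary_mat V"
  shows "unitary_mat (U ** V)"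
proof -
  have "mat_adj V ** mat_adj U ** (U ** V) = mat_adj V ** (mat_adj U ** U) ** V"
    by (simp add: matrix_mul_assoc)
  also have "\<dots> = mat 1" using U V by (simp add: unitary_matD)
  finally have 1: "mat_adj (U ** V) ** (U ** V) = mat 1" by (simp add: mat_adj_mult)
  have "U ** V ** (mat_adj V ** mat_adj U) = U ** (V ** mat_adj V) ** mat_adj U"
    by (simp add: matrix_mul_assoc)
  also have "\<dots> = mat 1" using U V by (simp add: unitary_matD)
  finally have 2: "(U ** V) ** mat_adj (U ** V) = mat 1" by (simp add: mat_adj_mult)
  show ?thesis using 1 2 by (simp add: unitary_mat_def)
qed

lemma unitary_mat_cancel:
  "unitary_mat U \<Longrightarrow> A ** mat_adj U ** U = A"
  "unitary_mat U \<Longrightarrow> A ** U ** mat_adj U = A"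
  by (metis matrix_mul_assoc matrix_mul_rid unitary_matD)+

lemma norm_unitary_mult_left:
  fixes A :: "complex^'n^'n"
  assumes "unitary_mat U" shows "norm (U ** A) = norm A"
proof -
  have "mat_adj A ** mat_adj U ** (U ** A) = mat_adj A ** (mat_adj U ** U) ** A"
    by (simp add: matrix_mul_assoc)
  hence "(norm (U ** A))\<^sup>2 = (norm A)\<^sup>2"
    using assms by (simp add: power2_norm_matrix_eq_trace mat_adj_mult unitary_matD)
  thus ?thesis by (simp add: power2_eq_iff_nonneg)
qed

lemma norm_unitary_mult_right:
  fixes A :: "complex^'n^'n"
  assumes "unitary_mat U" shows "norm (A ** U) = norm A"
proof -
  have "norm (A ** U) = norm (mat_adj U ** mat_adj A)"
    by (metis mat_adj_mult norm_mat_adj)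
  also have "\<dots> = norm A"
    using assms by (simp add: norm_unitary_mult_left unitary_mat_adj)
  finally show ?thesis .
qed

section \<open>Spectral theorem for Hermitian matrices\<close>

definition cinner :: "complex^'n \<Rightarrow> complex^'n \<Rightarrow> complex" where
  "cinner x y = (\<Sum>i\<in>UNIV. x $ i * cnj (y $ i))"

lemma matrix_vector_mult_nth: "(H *v x) $ i = (\<Sum>j\<in>UNIV. H $ i $ j * x $ j)"
  by (simp add: matrix_vector_mult_def)

lemma cinner_add_left: "cinner (x + y) z = cinner x z + cinner y z"
  by (simp add: cinner_def distrib_right sum.distrib)

lemma cinner_add_right: "cinner x (y + z) = cinner x y + cinner x z"
  by (simp add: cinner_def distrib_left sum.distrib)

lemma cinner_diff_left: "cinner (x - y) z = cinner x z - cinner y z"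
  by (simp add: cinner_def left_diff_distrib sum_subtractf)

lemma cinner_scaleC_left: "cinner (c *s x) y = c * cinner x y"
  by (simp add: cinner_def sum_distrib_left mult.assoc)

lemma cinner_scaleC_right: "cinner x (c *s y) = cnj c * cinner x y"
  by (simp add: cinner_def sum_distrib_left algebra_simps)

lemma cinner_commute: "cinner y x = cnj (cinner x y)"
  by (simp add: cinner_def mult.commute)

lemma cinner_self: "cinner x x = complex_of_real ((norm x)\<^sup>2)"
proof -
  have "(norm x)\<^sup>2 = (\<Sum>i\<in>UNIV. (cmod (x $ i))\<^sup>2)"
    unfolding norm_vec_def L2_set_def by (rule real_sqrt_pow2) (simp add: sum_nonneg)
  moreover have "cinner x x = (\<Sum>i\<in>UNIV. complex_of_real ((cmod (x$i))\<^sup>2))"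
    unfolding cinner_def by (rule sum.cong[OF refl]) (rule complex_norm_square[symmetric])
  ultimately show ?thesis by simp
qed

lemma Re_cinner_self: "Re (cinner x x) = (norm x)\<^sup>2"
  by (simp add: cinner_self)

lemma inner_eq_Re_cinner: "inner x y = Re (cinner x y)"
  by (simp add: inner_vec_def cinner_def inner_complex_def Re_sum)

lemma cinner_matrix_vector_mult: "cinner (H *v x) y = cinner x (mat_adj H *v y)"
proof -
  have "cinner (H *v x) y = (\<Sum>i\<in>UNIV. \<Sum>j\<in>UNIV. H $ i $ j * x $ j * cnj (y $ i))"
    unfolding cinner_def matrix_vector_mult_nth by (simp add: sum_distrib_right)
  also have "\<dots> = (\<Sum>j\<in>UNIV. \<Sum>i\<in>UNIV. H $ i $ j * x $ j * cnj (y $ i))"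
    by (rule sum.swap)
  also have "\<dots> = cinner x (mat_adj H *v y)"
    unfolding cinner_def matrix_vector_mult_nth by (simp add: sum_distrib_left mult_ac)
  finally show ?thesis .
qed

lemma matrix_vector_mult_add: "H *v (x + y) = H *v x + H *v (y :: complex^'n)"
  by (simp add: vec_eq_iff matrix_vector_mult_nth distrib_left sum.distrib)

lemma matrix_vector_mult_scaleC: "H *v (c *s x) = c *s (H *v (x :: complex^'n))"
  by (simp add: vec_eq_iff matrix_vector_mult_nth sum_distrib_left mult.left_commute)

lemma norm_scaleC_of_real: "norm (complex_of_real r *s (y::complex^'n)) = \<bar>r\<bar> * norm y"
proof -
  have "(norm (complex_of_real r *s y))\<^sup>2 = r * r * Re (cinner y y)"
    by (simp flip: Re_cinner_self add: cinner_scaleC_left cinner_scaleC_right)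
  also have "\<dots> = (\<bar>r\<bar> * norm y)\<^sup>2" by (simp add: Re_cinner_self power2_eq_square)
  finally show ?thesis by (simp add: power2_eq_iff_nonneg)
qed

lemma norm_normalize_scaleC: "x \<noteq> 0 \<Longrightarrow> norm (of_real (1 / norm x) *s (x::complex^'n)) = 1"
  by (simp only: norm_scaleC_of_real) simp

lemma quadratic_form_expand:
  fixes H :: "complex^'n^'n" and t :: real
  assumes herm: "mat_adj H = H"
  shows "Re (cinner (H *v (x + of_real t *s z)) (x + of_real t *s z)) =
         Re (cinner (H *v x) x) + 2 * t * Re (cinner (H *v x) z) + t\<^sup>2 * Re (cinner (H *v z) z)"
proof -
  have c: "cinner (H *v z) x = cnj (cinner (H *v x) z)"
    by (metis cinner_commute cinner_matrix_vector_mult herm)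
  have "cinner (H *v (x + of_real t *s z)) (x + of_real t *s z) =
        cinner (H *v x) x + of_real t * cinner (H *v x) z + of_real t * cinner (H *v z) x
        + of_real t * of_real t * cinner (H *v z) z"
    by (simp add: matrix_vector_mult_add matrix_vector_mult_scaleC cinner_add_left
        cinner_add_right cinner_scaleC_left cinner_scaleC_right algebra_simps)
  thus ?thesis unfolding c by (simp add: power2_eq_square)
qed

lemma linear_le_quadratic_imp_zero:
  fixes a C :: real
  assumes "\<And>t. 2 * t * a \<le> t\<^sup>2 * C"
  shows "a = 0"
proof (rule ccontr)
  assume a: "a \<noteq> 0"
  define K where "K = \<bar>C\<bar> + 1"
  have K: "K > 0" by (simp add: K_def)
  have "2 * (a / K) * a \<le> (a / K)\<^sup>2 * C" by (rule assms)
  hence "2 * (a * a) / K * (K * K) \<le> (a * a) * C / (K * K) * (K * K)"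
    by (intro mult_right_mono) (auto simp: power2_eq_square)
  hence "2 * (a * a) * K \<le> (a * a) * C"
    using K by (simp add: field_simps)
  moreover have "a * a > 0" using a by (auto simp: zero_less_mult_iff linorder_neq_iff)
  ultimately have "2 * K \<le> C"
    by (metis mult.assoc mult.commute mult_le_cancel_left_pos)
  thus False by (simp add: K_def)
qed

lemma rayleigh_maximiser_eigenvector:
  fixes H :: "complex^'n^'n"
  assumes herm: "mat_adj H = H" and x: "norm x = 1"
    and z: "z = H *v x - of_real (Re (cinner (H *v x) x)) *s x"
    and max: "\<And>t::real. Re (cinner (H *v (x + of_real t *s z)) (x + of_real t *s z))
                \<le> Re (cinner (H *v x) x) * (norm (x + of_real t *s z))\<^sup>2"
  shows "H *v x = of_real (Re (cinner (H *v x) x)) *s x"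
proof -
  define lam where "lam = Re (cinner (H *v x) x)"
  have norm_expand: "(norm (x + of_real t *s z))\<^sup>2 = 1 + 2 * t * Re (cinner x z) + t\<^sup>2 * (norm z)\<^sup>2"
    for t :: real
    using quadratic_form_expand[of "mat 1 :: complex^'n^'n" x t z] x
    by (simp add: cinner_self)
  have "(norm z)\<^sup>2 = Re (cinner (H *v x - of_real lam *s x) z)"
    by (simp add: Re_cinner_self z lam_def)
  hence res: "Re (cinner (H *v x) z) - lam * Re (cinner x z) = (norm z)\<^sup>2"
    by (simp add: cinner_diff_left cinner_scaleC_left)
  have "2 * t * (norm z)\<^sup>2 \<le> t\<^sup>2 * (lam * (norm z)\<^sup>2 - Re (cinner (H *v z) z))" for t :: real
    using max[of t] res unfolding quadratic_form_expand[OF herm] norm_expand lam_def[symmetric]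
    by (simp add: algebra_simps)
  hence "(norm z)\<^sup>2 = 0" by (rule linear_le_quadratic_imp_zero)
  thus ?thesis using z by (simp add: lam_def)
qed

lemma exists_nonzero_cinner_orthogonal:
  fixes u :: "'n \<Rightarrow> complex^'n"
  assumes T: "finite T" "card T < CARD('n)"
  shows "\<exists>x. x \<noteq> 0 \<and> (\<forall>i\<in>T. cinner x (u i) = 0)"
proof -
  \<comment> \<open>Real orthogonality to \<open>u i\<close> and \<open>\<i> *s u i\<close> is complex orthogonality to \<open>u i\<close>.\<close>
  define S where "S = u ` T \<union> (\<lambda>i. \<i> *s u i) ` T"
  have fS: "finite S" using T by (simp add: S_def)
  have "card S \<le> card (u ` T) + card ((\<lambda>i. \<i> *s u i) ` T)"
    unfolding S_def by (rule card_Un_le)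
  also have "\<dots> \<le> card T + card T" by (intro add_mono card_image_le T)
  finally have "dim S < DIM(complex^'n)" using T dim_le_card'[OF fS] by simp
  then obtain x :: "complex^'n" where x: "x \<noteq> 0" "\<And>y. y \<in> span S \<Longrightarrow> orthogonal x y"
    using orthogonal_to_subspace_exists by blast
  have "cinner x (u i) = 0" if i: "i \<in> T" for i
  proof -
    have "u i \<in> S" "\<i> *s u i \<in> S" using i by (auto simp: S_def)
    hence "orthogonal x (u i)" "orthogonal x (\<i> *s u i)" using x(2) span_base by blast+
    thus ?thesis
      by (simp add: orthogonal_def inner_eq_Re_cinner cinner_scaleC_right complex_eq_iff)
  qed
  thus ?thesis using x(1) by blast
qed

lemma rayleigh_quotient_attains_max:
  fixes H :: "complex^'n^'n"
  assumes "closed W" and x1: "x1 \<in> W" "x1 \<noteq> 0" and W_scaleC: "\<And>c x. x \<in> W \<Longrightarrow> c *s x \<in> W"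
  obtains x0 where "x0 \<in> W" "norm x0 = 1"
    "\<And>y. y \<in> W \<Longrightarrow> Re (cinner (H *v y) y) \<le> Re (cinner (H *v x0) x0) * (norm y)\<^sup>2"
proof -
  define f where "f x = Re (cinner (H *v x) x)" for x
  have "compact (W \<inter> sphere 0 1)" by (intro closed_Int_compact compact_sphere \<open>closed W\<close>)
  moreover have "continuous_on (W \<inter> sphere 0 1) f"
    unfolding f_def cinner_def matrix_vector_mult_def by (intro continuous_intros)
  moreover have "of_real (1 / norm x1) *s x1 \<in> W \<inter> sphere 0 1"
    using x1 W_scaleC norm_normalize_scaleC[OF x1(2)] by simp
  ultimately obtain x0 where x0: "x0 \<in> W \<inter> sphere 0 1"
    and max: "\<And>y. y \<in> W \<inter> sphere 0 1 \<Longrightarrow> f y \<le> f x0"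
    using continuous_attains_sup[of "W \<inter> sphere 0 1" f] by blast
  have Q: "f y \<le> f x0 * (norm y)\<^sup>2" if y: "y \<in> W" for y
  proof (cases "y = 0")
    case True thus ?thesis by (simp add: f_def cinner_def matrix_vector_mult_def)
  next
    case False
    define c where "c = complex_of_real (1 / norm y)"
    have "c *s y \<in> W \<inter> sphere 0 1"
      using y W_scaleC norm_normalize_scaleC[OF False] by (simp add: c_def)
    hence "f (c *s y) \<le> f x0" by (rule max)
    moreover have "f (c *s y) = f y / (norm y)\<^sup>2"
      by (simp add: f_def matrix_vector_mult_scaleC cinner_scaleC_left cinner_scaleC_right c_def
          power2_eq_square mult.assoc)
    ultimately show ?thesis using False by (simp add: divide_le_eq)
  qed
  show ?thesis using x0 Q[unfolded f_def] by (intro that[of x0]) (auto simp: f_def)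
qed

lemma hermitian_eigenvector_orthogonal:
  fixes H :: "complex^'n^'n" and u :: "'n \<Rightarrow> complex^'n"
  assumes herm: "mat_adj H = H" and T: "finite T"
    and eig: "\<And>i. i \<in> T \<Longrightarrow> H *v u i = of_real (l i) *s u i"
    and x1: "x1 \<noteq> 0" "\<forall>i\<in>T. cinner x1 (u i) = 0"
  shows "\<exists>x l0. norm x = 1 \<and> (\<forall>i\<in>T. cinner x (u i) = 0) \<and> H *v x = of_real l0 *s x"
proof -
  define W where "W = {x. \<forall>i\<in>T. cinner x (u i) = 0}"
  have W_add: "x + y \<in> W" and W_diff: "x - y \<in> W" and W_scaleC: "c *s x \<in> W"
    if "x \<in> W" "y \<in> W" for x y c
    using that by (simp_all add: W_def cinner_add_left cinner_diff_left cinner_scaleC_left)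
  have "W = (\<Inter>i\<in>T. {x. cinner x (u i) = 0})" by (auto simp: W_def)
  moreover have "closed {x. cinner x (u i) = 0}" for i
    unfolding cinner_def by (intro closed_Collect_eq continuous_intros)
  ultimately have "closed W" by auto
  then obtain x0 where x0: "x0 \<in> W" "norm x0 = 1"
    and max: "\<And>y. y \<in> W \<Longrightarrow> Re (cinner (H *v y) y) \<le> Re (cinner (H *v x0) x0) * (norm y)\<^sup>2"
    using rayleigh_quotient_attains_max[of W x1 H] x1 W_scaleC by (auto simp: W_def)
  define z where "z = H *v x0 - of_real (Re (cinner (H *v x0) x0)) *s x0"
  have "H *v x0 \<in> W"
    using x0 eig by (simp add: W_def cinner_matrix_vector_mult herm cinner_scaleC_right)
  hence "x0 + of_real t *s z \<in> W" for t :: real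
    using x0 unfolding z_def by (intro W_add W_diff W_scaleC) auto
  hence "H *v x0 = of_real (Re (cinner (H *v x0) x0)) *s x0"
    using max x0 by (intro rayleigh_maximiser_eigenvector[OF herm _ z_def]) auto
  thus ?thesis using x0 by (auto simp: W_def)
qed

lemma hermitian_orthonormal_eigenvectors:
  fixes H :: "complex^'n^'n" and T :: "'n set"
  assumes herm: "mat_adj H = H" and "finite T"
  shows "\<exists>u l. (\<forall>i\<in>T. \<forall>j\<in>T. cinner (u i) (u j) = (if i = j then 1 else 0)) \<and>
               (\<forall>i\<in>T. H *v u i = of_real (l i) *s u i)"
  using \<open>finite T\<close>
proof (induction T rule: finite_induct)
  case empty thus ?case by simp
next
  case (insert a T)
  then obtain u l where on: "\<forall>i\<in>T. \<forall>j\<in>T. cinner (u i) (u j) = (if i = j then 1 else 0)"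
    and ev: "\<forall>i\<in>T. H *v u i = of_real (l i) *s u i" by blast
  have "card (insert a T) \<le> CARD('n)" by (rule card_mono) auto
  hence "card T < CARD('n)" using insert by simp
  then obtain x1 where "x1 \<noteq> 0" "\<forall>i\<in>T. cinner x1 (u i) = 0"
    using exists_nonzero_cinner_orthogonal[OF insert(1)] by blast
  then obtain x l0 where x: "norm x = 1" "\<forall>i\<in>T. cinner x (u i) = 0" "H *v x = of_real l0 *s x"
    using hermitian_eigenvector_orthogonal[OF herm insert(1), of u l x1] ev by blast
  have "cinner x x = 1" using x(1) by (simp add: cinner_self)
  moreover have "cinner (u i) x = 0" if "i \<in> T" for i
    using x(2) that by (metis cinner_commute complex_cnj_zero)
  ultimately show ?case
    using on ev x insert(2) by (intro exI[of _ "u(a := x)"] exI[of _ "l(a := l0)"]) auto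
qed

theorem hermitian_unitary_diagonalizable:
  fixes H :: "complex^'n^'n"
  assumes herm: "mat_adj H = H"
  obtains U d where "unitary_mat U" "H = U ** mat_diag d ** mat_adj U"
proof -
  obtain u :: "'n \<Rightarrow> complex^'n" and l
    where on: "\<And>i j. cinner (u i) (u j) = (if i = j then 1 else 0)"
      and ev: "\<And>i. H *v u i = of_real (l i) *s u i"
    using hermitian_orthonormal_eigenvectors[OF herm, of UNIV] by auto
  define U :: "complex^'n^'n" where "U = (\<chi> i j. u j $ i)"
  have "(mat_adj U ** U) $ i $ j = cinner (u j) (u i)" for i j
    by (simp add: matrix_matrix_mult_nth U_def cinner_def mult.commute)
  hence 1: "mat_adj U ** U = mat 1" by (simp add: vec_eq_iff on mat_def)
  hence 2: "U ** mat_adj U = mat 1" by (simp add: matrix_left_right_inverse)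
  have "(H ** U) $ i $ j = (H *v u j) $ i" for i j
    by (simp add: matrix_matrix_mult_nth matrix_vector_mult_nth U_def)
  hence HU: "H ** U = U ** mat_diag l" by (simp add: vec_eq_iff ev U_def mult.commute)
  have "H = H ** (U ** mat_adj U)" using 2 by simp
  also have "\<dots> = U ** mat_diag l ** mat_adj U" by (simp add: matrix_mul_assoc HU)
  finally show ?thesis using 1 2 that by (auto simp: unitary_mat_def)
qed

section \<open>Functional calculus of positive semidefinite matrices\<close>

lemma mat_diag_intertwine:
  assumes "mat_diag d ** W = W ** mat_diag e"
  shows "mat_diag (\<lambda>i. f (d i)) ** W = W ** mat_diag (\<lambda>i. f (e i))"
proof -
  have "(mat_diag (\<lambda>i. f (d i)) ** W) $ i $ j = (W ** mat_diag (\<lambda>i. f (e i))) $ i $ j" for i j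
  proof -
    have "complex_of_real (d i) * W $ i $ j = W $ i $ j * complex_of_real (e j)"
      using assms by (metis mat_diag_mult_nth mult_mat_diag_nth)
    hence "W $ i $ j = 0 \<or> d i = e j" by (auto simp: mult.commute)
    thus ?thesis by (auto simp: mult.commute)
  qed
  thus ?thesis by (simp add: vec_eq_iff)
qed

lemma functional_calculus_intertwine:
  assumes U: "unitary_mat U" and V: "unitary_mat V"
    and HX: "(U ** mat_diag d ** mat_adj U) ** X = X ** (V ** mat_diag e ** mat_adj V)"
  shows "(U ** mat_diag (\<lambda>i. f (d i)) ** mat_adj U) ** X
         = X ** (V ** mat_diag (\<lambda>i. f (e i)) ** mat_adj V)"
proof -
  define W where "W = mat_adj U ** X ** V"
  have "mat_diag d ** W = mat_adj U ** ((U ** mat_diag d ** mat_adj U) ** X) ** V"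
    using U by (simp add: W_def matrix_mul_assoc unitary_matD unitary_mat_cancel)
  also have "\<dots> = W ** mat_diag e"
    using V by (simp add: HX W_def matrix_mul_assoc unitary_matD unitary_mat_cancel)
  finally have "mat_diag (\<lambda>i. f (d i)) ** W = W ** mat_diag (\<lambda>i. f (e i))"
    by (rule mat_diag_intertwine)
  hence "U ** (mat_diag (\<lambda>i. f (d i)) ** W) ** mat_adj V
         = U ** (W ** mat_diag (\<lambda>i. f (e i))) ** mat_adj V"
    by simp
  thus ?thesis using U V by (simp add: W_def matrix_mul_assoc unitary_matD unitary_mat_cancel)
qed

lemma functional_calculus_unique:
  assumes "unitary_mat U" "unitary_mat V"
    and "U ** mat_diag d ** mat_adj U = V ** mat_diag e ** mat_adj V"
  shows "U ** mat_diag (\<lambda>i. f (d i)) ** mat_adj U = V ** mat_diag (\<lambda>i. f (e i)) ** mat_adj V"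
  using functional_calculus_intertwine[OF assms(1,2), of d "mat 1" e f] assms(3) by simp

lemma psd_pow_unitary_diag:
  assumes U: "unitary_mat U" and d: "\<And>i. d i \<ge> 0" and H: "H = U ** mat_diag d ** mat_adj U"
  shows "psd_pow H r = U ** mat_diag (\<lambda>i. d i powr r) ** mat_adj U"
proof -
  let ?P = "\<lambda>B. \<exists>U d. unitary_mat U \<and> (\<forall>i. d i \<ge> 0) \<and>
       H = U ** mat_diag d ** mat_adj U \<and> B = U ** mat_diag (\<lambda>i. d i powr r) ** mat_adj U"
  have "?P (U ** mat_diag (\<lambda>i. d i powr r) ** mat_adj U)" using U d H by blast
  hence "?P (psd_pow H r)" unfolding psd_pow_def by (rule someI)
  then obtain U' d' where U': "unitary_mat U'" "H = U' ** mat_diag d' ** mat_adj U'"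
    and B: "psd_pow H r = U' ** mat_diag (\<lambda>i. d' i powr r) ** mat_adj U'" by blast
  have "U' ** mat_diag d' ** mat_adj U' = U ** mat_diag d ** mat_adj U" using U'(2) H by simp
  with U'(1) U show ?thesis unfolding B by (rule functional_calculus_unique)
qed

lemma mat_adj_mult_self_diagonalization:
  fixes x :: "complex^'n^'n"
  obtains V s where "unitary_mat V" "\<And>i. s i \<ge> 0"
    "mat_adj x ** x = V ** mat_diag (\<lambda>i. (s i)\<^sup>2) ** mat_adj V"
proof -
  obtain V d where V: "unitary_mat V" and H: "mat_adj x ** x = V ** mat_diag d ** mat_adj V"
    using hermitian_unitary_diagonalizable[of "mat_adj x ** x"] by (auto simp: mat_adj_mult)
  have "mat_adj (x ** V) ** (x ** V) = mat_adj V ** (mat_adj x ** x) ** V"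
    by (simp add: mat_adj_mult matrix_mul_assoc)
  also have "\<dots> = mat_diag d"
    using V unfolding H by (simp add: matrix_mul_assoc unitary_matD unitary_mat_cancel)
  finally have "complex_of_real (d i) = (mat_adj (x ** V) ** (x ** V)) $ i $ i" for i
    by simp
  hence "d i = (\<Sum>k\<in>UNIV. (cmod ((x ** V) $ k $ i))\<^sup>2)" for i
    unfolding mat_adj_mult_self_nth_diag by (simp only: of_real_eq_iff)
  hence d0: "d i \<ge> 0" for i by (simp add: sum_nonneg)
  show ?thesis
  proof (rule that[OF V, of "\<lambda>i. sqrt (d i)"])
    show "sqrt (d i) \<ge> 0" for i using d0 by simp
    show "mat_adj x ** x = V ** mat_diag (\<lambda>i. (sqrt (d i))\<^sup>2) ** mat_adj V"
      using H d0 by simp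
  qed
qed

lemma psd_pow_mat_abs_diagonalization:
  fixes x :: "complex^'n^'n"
  obtains V s where "unitary_mat V" "\<And>i. s i \<ge> 0"
    "mat_adj x ** x = V ** mat_diag (\<lambda>i. (s i)\<^sup>2) ** mat_adj V"
    "psd_pow (mat_abs x) q = V ** mat_diag (\<lambda>i. s i powr q) ** mat_adj V"
proof -
  obtain V s where V: "unitary_mat V" and s: "\<And>i. s i \<ge> 0"
    and H: "mat_adj x ** x = V ** mat_diag (\<lambda>i. (s i)\<^sup>2) ** mat_adj V"
    using mat_adj_mult_self_diagonalization[of x] by blast
  have "mat_abs x = V ** mat_diag (\<lambda>i. ((s i)\<^sup>2) powr (1/2)) ** mat_adj V"
    unfolding mat_abs_def using V H by (intro psd_pow_unitary_diag) auto
  also have "(\<lambda>i. ((s i)\<^sup>2) powr (1/2)) = s"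
    using s by (auto simp: powr_half_sqrt)
  finally have "psd_pow (mat_abs x) q = V ** mat_diag (\<lambda>i. s i powr q) ** mat_adj V"
    using V s by (intro psd_pow_unitary_diag) auto
  with V s H show ?thesis by (rule that)
qed

section \<open>Lipschitz continuity of the functional calculus\<close>

lemma mat_adj_mult_self_diag_column_zero:
  fixes c :: "complex^'n^'n"
  assumes "(mat_adj c ** c) $ i $ i = 0"
  shows "c $ k $ i = 0"
proof -
  have "(\<Sum>k\<in>UNIV. (cmod (c $ k $ i))\<^sup>2) = 0"
    using assms unfolding mat_adj_mult_self_nth_diag by (simp only: of_real_eq_0_iff)
  hence "(cmod (c $ k $ i))\<^sup>2 = 0" by (subst (asm) sum_nonneg_eq_0_iff) auto
  thus ?thesis by simp
qed

text \<open>Bessel's inequality for the orthogonal (not normalised) columns of \<open>c\<close>; the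
  projection onto their span is \<open>c W c\<^sup>*\<close> with \<open>W\<close> the pseudo-inverse of \<open>c\<^sup>* c\<close>.\<close>
lemma bessel_inequality_columns:
  fixes c d :: "complex^'n^'n"
  assumes cc: "mat_adj c ** c = mat_diag (\<lambda>i. (s i)\<^sup>2)"
  shows "(\<Sum>i\<in>UNIV. if s i = 0 then 0 else (cmod ((mat_adj c ** d) $ i $ j))\<^sup>2 / (s i)\<^sup>2)
         \<le> Re ((mat_adj d ** d) $ j $ j)"
proof -
  define W where "W = mat_diag (\<lambda>i. if s i = 0 then 0 else 1 / (s i)\<^sup>2)"
  define P where "P = c ** W ** mat_adj c"
  define \<beta> where "\<beta> = mat_adj c ** d"
  have "W ** mat_diag (\<lambda>i. (s i)\<^sup>2) ** W = W"
    unfolding W_def mat_diag_mult_mat_diag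
    by (rule arg_cong[where f=mat_diag]) (auto simp: fun_eq_iff power2_eq_square)
  hence PP: "P ** P = P"
    by (simp add: P_def matrix_mul_assoc flip: cc) (simp add: matrix_mul_assoc[symmetric])
  have aP: "mat_adj P = P" by (simp add: P_def mat_adj_mult W_def matrix_mul_assoc)
  define R where "R = mat 1 - P"
  have RR: "mat_adj R ** R = R"
    by (simp add: R_def aP matrix_diff_ldistrib matrix_diff_rdistrib PP)
  have "mat_adj (R ** d) ** (R ** d) = mat_adj d ** (mat_adj R ** R) ** d"
    by (simp add: mat_adj_mult matrix_mul_assoc)
  also have "\<dots> = mat_adj d ** d - mat_adj d ** P ** d"
    by (simp only: RR) (simp add: R_def matrix_diff_ldistrib matrix_diff_rdistrib)
  also have "mat_adj d ** P ** d = mat_adj \<beta> ** W ** \<beta>"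
    by (simp add: P_def \<beta>_def mat_adj_mult matrix_mul_assoc)
  finally have "(mat_adj (R ** d) ** (R ** d)) $ j $ j
                = (mat_adj d ** d) $ j $ j - (mat_adj \<beta> ** W ** \<beta>) $ j $ j"
    by simp
  hence "Re ((mat_adj d ** d) $ j $ j - (mat_adj \<beta> ** W ** \<beta>) $ j $ j)
         = Re ((mat_adj (R ** d) ** (R ** d)) $ j $ j)"
    by simp
  also have "\<dots> = (\<Sum>i\<in>UNIV. (cmod ((R ** d) $ i $ j))\<^sup>2)"
    by (simp only: mat_adj_mult_self_nth_diag Re_complex_of_real)
  moreover have "0 \<le> (\<Sum>i\<in>UNIV. (cmod ((R ** d) $ i $ j))\<^sup>2)" by (simp add: sum_nonneg)
  ultimately have "Re ((mat_adj \<beta> ** W ** \<beta>) $ j $ j) \<le> Re ((mat_adj d ** d) $ j $ j)"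
    by simp
  moreover have "(mat_adj \<beta> ** W ** \<beta>) $ j $ j =
     (\<Sum>i\<in>UNIV. complex_of_real (if s i = 0 then 0 else (cmod (\<beta> $ i $ j))\<^sup>2 / (s i)\<^sup>2))"
    by (subst matrix_matrix_mult_nth, rule sum.cong[OF refl])
       (simp add: W_def complex_norm_square mult.commute del: of_real_power)
  ultimately show ?thesis unfolding \<beta>_def by (simp add: Re_sum)
qed

lemma cross_term_pointwise_le:
  fixes a b :: complex and s t :: real
  assumes s: "s > 0" and t: "t > 0"
  shows "4 * Re (a * cnj b) \<le> 2 * s * t * (cmod a)\<^sup>2 + (cmod b)\<^sup>2 / s\<^sup>2 + (cmod b)\<^sup>2 / t\<^sup>2"
proof -
  define p where "p = cmod a"
  define q where "q = cmod b"
  have "Re (a * cnj b) \<le> p * q"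
    using complex_Re_le_cmod[of "a * cnj b"] by (simp add: p_def q_def norm_mult)
  moreover have "0 \<le> 2 * s * t * (s * t * p - q)\<^sup>2 + q\<^sup>2 * (s - t)\<^sup>2"
    using s t by (intro add_nonneg_nonneg mult_nonneg_nonneg) auto
  hence "4 * p * q * (s\<^sup>2 * t\<^sup>2) \<le> 2 * s * t * p\<^sup>2 * (s\<^sup>2 * t\<^sup>2) + q\<^sup>2 * t\<^sup>2 + q\<^sup>2 * s\<^sup>2"
    by (simp add: power2_eq_square algebra_simps)
  hence "4 * p * q \<le> 2 * s * t * p\<^sup>2 + q\<^sup>2 / s\<^sup>2 + q\<^sup>2 / t\<^sup>2"
    using s t by (simp add: field_simps power2_eq_square)
  ultimately show ?thesis unfolding p_def q_def by linarith
qed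

lemma inner_mult_eq_sum_entries:
  fixes A c d :: "complex^'n^'n"
  shows "inner (c ** A) d = (\<Sum>i\<in>UNIV. \<Sum>j\<in>UNIV. Re (A $ i $ j * cnj ((mat_adj c ** d) $ i $ j)))"
proof -
  have "inner (c ** A) d = Re (trace (mat_adj (mat_adj c ** d) ** A))"
    by (simp add: inner_matrix_eq_trace mat_adj_mult matrix_mul_assoc)
  also have "trace (mat_adj (mat_adj c ** d) ** A)
             = (\<Sum>i\<in>UNIV. \<Sum>j\<in>UNIV. A $ i $ j * cnj ((mat_adj c ** d) $ i $ j))"
    unfolding trace_def matrix_matrix_mult_nth[of "mat_adj _"] mat_adj_nth
    by (subst sum.swap) (simp add: mult.commute)
  finally show ?thesis by (simp only: Re_sum)
qed

text \<open>The key estimate: with \<open>\<beta> = c\<^sup>* d\<close>, each cross term is split by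
  the pointwise AM-GM bound and the two resulting sums are controlled by Bessel's inequality,
  once for the columns of \<open>c\<close> and once for those of \<open>d\<close>.\<close>
lemma inner_mult_le_singular_values:
  fixes A c d :: "complex^'n^'n"
  assumes cc: "mat_adj c ** c = mat_diag (\<lambda>i. (s i)\<^sup>2)"
    and dd: "mat_adj d ** d = mat_diag (\<lambda>j. (t j)\<^sup>2)"
    and s0: "\<And>i. s i \<ge> 0" and t0: "\<And>j. t j \<ge> 0"
  shows "4 * inner (c ** A) d
         \<le> 2 * (\<Sum>i\<in>UNIV. \<Sum>j\<in>UNIV. s i * t j * (cmod (A $ i $ j))\<^sup>2)
           + (\<Sum>i\<in>UNIV. (s i)\<^sup>2) + (\<Sum>j\<in>UNIV. (t j)\<^sup>2)"
proof -
  define \<beta> where "\<beta> = mat_adj c ** d"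
  define g where "g i j = (if s i = 0 then 0 else (cmod (\<beta> $ i $ j))\<^sup>2 / (s i)\<^sup>2)" for i j
  define h where "h i j = (if t j = 0 then 0 else (cmod (\<beta> $ i $ j))\<^sup>2 / (t j)\<^sup>2)" for i j
  have g: "(\<Sum>i\<in>UNIV. g i j) \<le> (t j)\<^sup>2" for j
    using bessel_inequality_columns[OF cc, of d j] unfolding g_def \<beta>_def dd by simp
  have "mat_adj d ** c = mat_adj \<beta>" by (simp add: \<beta>_def mat_adj_mult)
  hence e: "cmod ((mat_adj d ** c) $ j $ i) = cmod (\<beta> $ i $ j)" for i j by simp
  have h: "(\<Sum>j\<in>UNIV. h i j) \<le> (s i)\<^sup>2" for i
    using bessel_inequality_columns[OF dd, of c i, unfolded e cc] unfolding h_def by simp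
  have \<beta>0: "\<beta> $ i $ j = 0" if "s i = 0 \<or> t j = 0" for i j
    using that mat_adj_mult_self_diag_column_zero[of c i] mat_adj_mult_self_diag_column_zero[of d j]
    by (auto simp: \<beta>_def matrix_matrix_mult_nth cc dd)
  have pointwise: "4 * Re (A $ i $ j * cnj (\<beta> $ i $ j))
                   \<le> 2 * s i * t j * (cmod (A $ i $ j))\<^sup>2 + g i j + h i j" for i j
  proof (cases "s i = 0 \<or> t j = 0")
    case True
    thus ?thesis using \<beta>0[OF True] s0[of i] t0[of j] by (auto simp: g_def h_def)
  next
    case False
    hence "s i > 0" "t j > 0" using s0[of i] t0[of j] by auto
    thus ?thesis using cross_term_pointwise_le[of "s i" "t j" "A $ i $ j" "\<beta> $ i $ j"] False
      by (simp add: g_def h_def)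
  qed
  have "4 * inner (c ** A) d = (\<Sum>i\<in>UNIV. \<Sum>j\<in>UNIV. 4 * Re (A $ i $ j * cnj (\<beta> $ i $ j)))"
    by (simp add: inner_mult_eq_sum_entries \<beta>_def sum_distrib_left)
  also have "\<dots> \<le> (\<Sum>i\<in>UNIV. \<Sum>j\<in>UNIV. 2 * s i * t j * (cmod (A $ i $ j))\<^sup>2 + g i j + h i j)"
    by (intro sum_mono pointwise)
  also have "\<dots> = 2 * (\<Sum>i\<in>UNIV. \<Sum>j\<in>UNIV. s i * t j * (cmod (A $ i $ j))\<^sup>2)
      + (\<Sum>j\<in>UNIV. \<Sum>i\<in>UNIV. g i j) + (\<Sum>i\<in>UNIV. \<Sum>j\<in>UNIV. h i j)"
    by (simp add: sum.distrib sum_distrib_left mult.assoc sum.swap[of g])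
  also have "\<dots> \<le> 2 * (\<Sum>i\<in>UNIV. \<Sum>j\<in>UNIV. s i * t j * (cmod (A $ i $ j))\<^sup>2)
      + (\<Sum>j\<in>UNIV. (t j)\<^sup>2) + (\<Sum>i\<in>UNIV. (s i)\<^sup>2)"
    by (intro add_mono order_refl sum_mono g h)
  finally show ?thesis by simp
qed

lemma unitary_mat_row_col_norms:
  fixes A :: "complex^'n^'n"
  assumes "unitary_mat A"
  shows "(\<Sum>j\<in>UNIV. (cmod (A $ i $ j))\<^sup>2) = 1" "(\<Sum>i\<in>UNIV. (cmod (A $ i $ j))\<^sup>2) = 1"
proof -
  have "complex_of_real (\<Sum>j\<in>UNIV. (cmod (A $ i $ j))\<^sup>2) = (A ** mat_adj A) $ i $ i"
    "complex_of_real (\<Sum>i\<in>UNIV. (cmod (A $ i $ j))\<^sup>2) = (mat_adj A ** A) $ j $ j"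
    by (simp_all only: mult_mat_adj_self_nth_diag mat_adj_mult_self_nth_diag)
  thus "(\<Sum>j\<in>UNIV. (cmod (A $ i $ j))\<^sup>2) = 1" "(\<Sum>i\<in>UNIV. (cmod (A $ i $ j))\<^sup>2) = 1"
    using assms by (simp_all add: unitary_matD mat_def del: of_real_sum of_real_power)
qed

text \<open>The singular-value form of \<open>\<parallel>|x| - |y|\<parallel>\<^sub>2 \<le> \<surd>2 \<parallel>x - y\<parallel>\<^sub>2\<close>: here
  \<open>x\<^sup>*x = V diag(s\<^sup>2) V\<^sup>*\<close>, \<open>y\<^sup>*y = Q diag(t\<^sup>2) Q\<^sup>*\<close> and \<open>V\<^sup>*Q\<close> is the relative rotation.\<close>
lemma sum_singular_value_gaps_le:
  fixes x y V Q :: "complex^'n^'n"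
  assumes V: "unitary_mat V" and Q: "unitary_mat Q"
    and Hx: "mat_adj x ** x = V ** mat_diag (\<lambda>i. (s i)\<^sup>2) ** mat_adj V"
    and Hy: "mat_adj y ** y = Q ** mat_diag (\<lambda>i. (t i)\<^sup>2) ** mat_adj Q"
    and s0: "\<And>i. s i \<ge> 0" and t0: "\<And>j. t j \<ge> 0"
  shows "(\<Sum>i\<in>UNIV. \<Sum>j\<in>UNIV. (s i - t j)\<^sup>2 * (cmod ((mat_adj V ** Q) $ i $ j))\<^sup>2)
         \<le> 2 * (norm (x - y))\<^sup>2"
proof -
  define A where "A = mat_adj V ** Q"
  define c where "c = x ** V"
  define d where "d = y ** Q"
  define a2 where "a2 i j = (cmod (A $ i $ j))\<^sup>2" for i j
  have "mat_adj c ** c = mat_adj V ** (mat_adj x ** x) ** V"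
    by (simp add: c_def mat_adj_mult matrix_mul_assoc)
  hence cc: "mat_adj c ** c = mat_diag (\<lambda>i. (s i)\<^sup>2)"
    using V by (simp add: Hx matrix_mul_assoc unitary_matD unitary_mat_cancel)
  have "mat_adj d ** d = mat_adj Q ** (mat_adj y ** y) ** Q"
    by (simp add: d_def mat_adj_mult matrix_mul_assoc)
  hence dd: "mat_adj d ** d = mat_diag (\<lambda>i. (t i)\<^sup>2)"
    using Q by (simp add: Hy matrix_mul_assoc unitary_matD unitary_mat_cancel)
  have AU: "unitary_mat A" unfolding A_def using V Q by (intro unitary_mat_mult unitary_mat_adj)
  have "(x - y) ** Q = c ** A - d"
    using V by (simp add: matrix_diff_rdistrib c_def A_def d_def matrix_mul_assoc unitary_mat_cancel)
  hence "norm (x - y) = norm (c ** A - d)" using Q by (metis norm_unitary_mult_right)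
  moreover have "norm (c ** A) = norm c" using AU by (rule norm_unitary_mult_right)
  ultimately have "2 * inner (c ** A) d = (norm c)\<^sup>2 + (norm d)\<^sup>2 - (norm (x - y))\<^sup>2"
    using dot_norm_neg[of "c ** A" d] by simp
  hence N: "(norm (x - y))\<^sup>2 = (\<Sum>i\<in>UNIV. (s i)\<^sup>2) + (\<Sum>j\<in>UNIV. (t j)\<^sup>2) - 2 * inner (c ** A) d"
    unfolding power2_norm_eq_sum_singular_values[OF cc] power2_norm_eq_sum_singular_values[OF dd]
    by simp
  have "(\<Sum>i\<in>UNIV. \<Sum>j\<in>UNIV. (s i - t j)\<^sup>2 * a2 i j) =
        (\<Sum>i\<in>UNIV. \<Sum>j\<in>UNIV. (s i)\<^sup>2 * a2 i j) + (\<Sum>i\<in>UNIV. \<Sum>j\<in>UNIV. (t j)\<^sup>2 * a2 i j)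
        - 2 * (\<Sum>i\<in>UNIV. \<Sum>j\<in>UNIV. s i * t j * a2 i j)"
    by (simp add: power2_diff algebra_simps sum.distrib sum_subtractf sum_distrib_left)
  also have "(\<Sum>i\<in>UNIV. \<Sum>j\<in>UNIV. (s i)\<^sup>2 * a2 i j) = (\<Sum>i\<in>UNIV. (s i)\<^sup>2)"
    using unitary_mat_row_col_norms(1)[OF AU] by (simp add: a2_def flip: sum_distrib_left)
  also have "(\<Sum>i\<in>UNIV. \<Sum>j\<in>UNIV. (t j)\<^sup>2 * a2 i j) = (\<Sum>j\<in>UNIV. (t j)\<^sup>2)"
    using unitary_mat_row_col_norms(2)[OF AU]
    by (subst sum.swap) (simp add: a2_def flip: sum_distrib_left)
  finally show ?thesis
    using inner_mult_le_singular_values[OF cc dd s0 t0, of A] N by (simp add: a2_def A_def)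
qed

lemma norm_functional_calculus_diff_le:
  fixes x y V Q :: "complex^'n^'n"
  assumes V: "unitary_mat V" and Q: "unitary_mat Q"
    and Hx: "mat_adj x ** x = V ** mat_diag (\<lambda>i. (s i)\<^sup>2) ** mat_adj V"
    and Hy: "mat_adj y ** y = Q ** mat_diag (\<lambda>i. (t i)\<^sup>2) ** mat_adj Q"
    and s0: "\<And>i. s i \<ge> 0" and t0: "\<And>j. t j \<ge> 0"
    and L: "L \<ge> 0" and lip: "\<And>i j. \<bar>f (s i) - f (t j)\<bar> \<le> L * \<bar>s i - t j\<bar>"
  shows "norm (V ** mat_diag (\<lambda>i. f (s i)) ** mat_adj V - Q ** mat_diag (\<lambda>i. f (t i)) ** mat_adj Q)
         \<le> sqrt 2 * L * norm (x - y)"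
proof -
  define A where "A = mat_adj V ** Q"
  define M where "M = V ** mat_diag (\<lambda>i. f (s i)) ** mat_adj V - Q ** mat_diag (\<lambda>i. f (t i)) ** mat_adj Q"
  have "mat_adj V ** M ** Q = mat_diag (\<lambda>i. f (s i)) ** A - A ** mat_diag (\<lambda>i. f (t i))"
    using V Q by (simp add: M_def A_def matrix_diff_ldistrib matrix_diff_rdistrib matrix_mul_assoc
        unitary_matD unitary_mat_cancel)
  moreover have "norm (mat_adj V ** M ** Q) = norm M"
    using V Q by (simp add: norm_unitary_mult_right norm_unitary_mult_left unitary_mat_adj)
  ultimately have "(norm M)\<^sup>2 = (norm (mat_diag (\<lambda>i. f (s i)) ** A - A ** mat_diag (\<lambda>i. f (t i))))\<^sup>2"
    by simp
  also have "\<dots> = (\<Sum>i\<in>UNIV. \<Sum>j\<in>UNIV. (f (s i) - f (t j))\<^sup>2 * (cmod (A $ i $ j))\<^sup>2)"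
    unfolding power2_norm_matrix
  proof (intro sum.cong refl)
    fix i j
    have "(mat_diag (\<lambda>i. f (s i)) ** A - A ** mat_diag (\<lambda>i. f (t i))) $ i $ j
          = complex_of_real (f (s i) - f (t j)) * A $ i $ j"
      by (simp add: algebra_simps)
    thus "(cmod ((mat_diag (\<lambda>i. f (s i)) ** A - A ** mat_diag (\<lambda>i. f (t i))) $ i $ j))\<^sup>2 =
          (f (s i) - f (t j))\<^sup>2 * (cmod (A $ i $ j))\<^sup>2"
      by (simp add: norm_mult power_mult_distrib del: of_real_diff)
  qed
  also have "\<dots> \<le> (\<Sum>i\<in>UNIV. \<Sum>j\<in>UNIV. L\<^sup>2 * ((s i - t j)\<^sup>2 * (cmod (A $ i $ j))\<^sup>2))"
  proof (intro sum_mono)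
    fix i j
    have "(f (s i) - f (t j))\<^sup>2 \<le> (L * \<bar>s i - t j\<bar>)\<^sup>2"
      using power_mono[OF lip[of i j], of 2] by simp
    thus "(f (s i) - f (t j))\<^sup>2 * (cmod (A $ i $ j))\<^sup>2 \<le> L\<^sup>2 * ((s i - t j)\<^sup>2 * (cmod (A $ i $ j))\<^sup>2)"
      by (simp add: power_mult_distrib mult.assoc[symmetric] mult_right_mono)
  qed
  also have "\<dots> \<le> L\<^sup>2 * (2 * (norm (x - y))\<^sup>2)"
    unfolding A_def sum_distrib_left[symmetric]
    by (intro mult_left_mono sum_singular_value_gaps_le[OF V Q Hx Hy s0 t0]) auto
  also have "\<dots> = (sqrt 2 * L * norm (x - y))\<^sup>2" by (simp add: power_mult_distrib)
  finally show ?thesis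
    unfolding M_def[symmetric] by (rule power2_le_imp_le) (use L in auto)
qed

lemma singular_value_le_norm:
  fixes x V :: "complex^'n^'n"
  assumes V: "unitary_mat V" and s0: "s i \<ge> 0"
    and Hx: "mat_adj x ** x = V ** mat_diag (\<lambda>i. (s i)\<^sup>2) ** mat_adj V"
  shows "s i \<le> norm x"
proof -
  have "mat_adj (x ** V) ** (x ** V) = mat_adj V ** (mat_adj x ** x) ** V"
    by (simp add: mat_adj_mult matrix_mul_assoc)
  also have "\<dots> = mat_diag (\<lambda>i. (s i)\<^sup>2)"
    using V by (simp add: Hx matrix_mul_assoc unitary_matD unitary_mat_cancel)
  finally have "(s i)\<^sup>2 = (\<Sum>k\<in>UNIV. (cmod ((x ** V) $ k $ i))\<^sup>2)"
    using mat_adj_mult_self_nth_diag[of "x ** V" i] by (simp del: of_real_sum of_real_power)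
  also have "\<dots> \<le> (\<Sum>k\<in>UNIV. \<Sum>j\<in>UNIV. (cmod ((x ** V) $ k $ j))\<^sup>2)"
    by (intro sum_mono member_le_sum) auto
  also have "\<dots> = (norm x)\<^sup>2"
    using V by (simp add: norm_unitary_mult_right flip: power2_norm_matrix)
  finally show ?thesis using s0 by (simp add: power2_le_iff_abs_le)
qed

lemma abs_powr_diff_le:
  fixes a b R q :: real
  assumes q: "q \<ge> 1" and a: "0 \<le> a" "a \<le> R" and b: "0 \<le> b" "b \<le> R"
  shows "\<bar>a powr q - b powr q\<bar> \<le> q * R powr (q - 1) * \<bar>a - b\<bar>"
proof -
  have mvt: "\<bar>u powr q - v powr q\<bar> \<le> q * R powr (q - 1) * \<bar>u - v\<bar>"
    if uv: "0 \<le> v" "v < u" "u \<le> R" for u v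
  proof -
    have cont: "continuous_on {v..u} (\<lambda>x. x powr q)"
      using uv q by (intro continuous_on_powr') (auto intro!: continuous_intros)
    have dif: "(\<lambda>x. x powr q) differentiable (at x)" if "v < x" "x < u" for x
      using that uv has_real_derivative_powr[of x q] real_differentiable_def by fastforce
    obtain l z where z: "v < z" "z < u" "DERIV (\<lambda>x. x powr q) z :> l"
      and eq: "u powr q - v powr q = (u - v) * l"
      using MVT[OF uv(2) cont dif] by blast
    have "l = q * z powr (q - 1)"
      using DERIV_unique[OF z(3) has_real_derivative_powr[of z q]] z uv by simp
    hence "0 \<le> l" "l \<le> q * R powr (q - 1)"
      using z uv q by (auto intro!: mult_left_mono powr_mono2)
    thus ?thesis using eq uv by (simp add: abs_mult)
  qed
  show ?thesis
    using mvt[of a b] mvt[of b a] a b by (cases a b rule: linorder_cases) (auto simp: abs_minus_commute)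
qed

lemma psd_pow_mat_abs_lipschitz:
  fixes x y :: "complex^'n^'n"
  assumes q: "q \<ge> 1" and x: "norm x \<le> R" and y: "norm y \<le> R"
  shows "norm (psd_pow (mat_abs x) q - psd_pow (mat_abs y) q)
         \<le> sqrt 2 * (q * R powr (q - 1)) * norm (x - y)"
proof -
  obtain V s where V: "unitary_mat V" and s0: "\<And>i. s i \<ge> 0"
    and Hx: "mat_adj x ** x = V ** mat_diag (\<lambda>i. (s i)\<^sup>2) ** mat_adj V"
    and Px: "psd_pow (mat_abs x) q = V ** mat_diag (\<lambda>i. s i powr q) ** mat_adj V"
    using psd_pow_mat_abs_diagonalization[where x = "x" and q = q] by blast
  obtain Q t where Q: "unitary_mat Q" and t0: "\<And>i. t i \<ge> 0"
    and Hy: "mat_adj y ** y = Q ** mat_diag (\<lambda>i. (t i)\<^sup>2) ** mat_adj Q"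
    and Py: "psd_pow (mat_abs y) q = Q ** mat_diag (\<lambda>i. t i powr q) ** mat_adj Q"
    using psd_pow_mat_abs_diagonalization[where x = "y" and q = q] by blast
  have "s i \<le> R" "t i \<le> R" for i
    using singular_value_le_norm[OF V s0 Hx, of i] singular_value_le_norm[OF Q t0 Hy, of i] x y
    by linarith+
  thus ?thesis unfolding Px Py using q s0 t0
    by (intro norm_functional_calculus_diff_le[OF V Q Hx Hy s0 t0] abs_powr_diff_le) auto
qed

section \<open>The Hamiltonian vector field\<close>

lemma ham_field_lipschitz:
  fixes x y :: "complex^'n^'n"
  assumes q: "q \<ge> 1" and x: "norm x \<le> R" and y: "norm y \<le> R"
  shows "norm (ham_field q x - ham_field q y) \<le> 2 * sqrt 2 * (q * R powr (q - 1)) * norm (x - y)"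
proof -
  let ?P = "\<lambda>x. psd_pow (mat_abs x) q" and ?L = "sqrt 2 * (q * R powr (q - 1)) * norm (x - y)"
  have "norm (ham_field q x - ham_field q y)
        = norm ((?P x - ?P y) - (?P (mat_adj x) - ?P (mat_adj y)))"
    by (simp add: ham_field_def algebra_simps)
  also have "\<dots> \<le> norm (?P x - ?P y) + norm (?P (mat_adj x) - ?P (mat_adj y))"
    by (rule norm_triangle_ineq4)
  also have "\<dots> \<le> ?L + ?L"
  proof (intro add_mono psd_pow_mat_abs_lipschitz[OF q x y])
    have "norm (mat_adj x - mat_adj y) = norm (x - y)" by (metis mat_adj_diff norm_mat_adj)
    thus "norm (?P (mat_adj x) - ?P (mat_adj y)) \<le> ?L"
      using psd_pow_mat_abs_lipschitz[OF q, where x = "mat_adj x" and y = "mat_adj y"] x y by simp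
  qed
  finally show ?thesis by (simp add: mult_ac)
qed

lemma mat_adj_psd_pow_mat_abs: "mat_adj (psd_pow (mat_abs x) q) = psd_pow (mat_abs x) q"
proof -
  obtain V s where "psd_pow (mat_abs x) q = V ** mat_diag (\<lambda>i. s i powr q) ** mat_adj V"
    using psd_pow_mat_abs_diagonalization[where x = "x" and q = q] by blast
  thus ?thesis by (simp add: mat_adj_mult matrix_mul_assoc)
qed

lemma psd_pow_mat_abs_intertwine:
  fixes w :: "complex^'n^'n"
  shows "psd_pow (mat_abs (mat_adj w)) q ** w = w ** psd_pow (mat_abs w) q"
proof -
  obtain V s where V: "unitary_mat V" and s0: "\<And>i. s i \<ge> 0"
    and Hw: "mat_adj w ** w = V ** mat_diag (\<lambda>i. (s i)\<^sup>2) ** mat_adj V"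
    and Pw: "psd_pow (mat_abs w) q = V ** mat_diag (\<lambda>i. s i powr q) ** mat_adj V"
    using psd_pow_mat_abs_diagonalization[where x = "w" and q = q] by blast
  obtain U t where U: "unitary_mat U" and t0: "\<And>i. t i \<ge> 0"
    and Hw': "mat_adj (mat_adj w) ** mat_adj w = U ** mat_diag (\<lambda>i. (t i)\<^sup>2) ** mat_adj U"
    and Pw': "psd_pow (mat_abs (mat_adj w)) q = U ** mat_diag (\<lambda>i. t i powr q) ** mat_adj U"
    using psd_pow_mat_abs_diagonalization[where x = "mat_adj w" and q = q] by blast
  have "(w ** mat_adj w) ** w = w ** (mat_adj w ** w)" by (simp add: matrix_mul_assoc)
  hence "(U ** mat_diag (\<lambda>i. (t i)\<^sup>2) ** mat_adj U) ** w = w ** (V ** mat_diag (\<lambda>i. (s i)\<^sup>2) ** mat_adj V)"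
    using Hw Hw' by simp
  from functional_calculus_intertwine[OF U V this, of "\<lambda>a. sqrt a powr q"]
  show ?thesis unfolding Pw Pw' using s0 t0 by simp
qed

lemma inner_ham_field: "inner w (ham_field q w) = 0"
proof -
  have "trace (mat_adj (ham_field q w) ** w)
        = trace (psd_pow (mat_abs w) q ** w) - trace (psd_pow (mat_abs (mat_adj w)) q ** w)"
    by (simp add: ham_field_def mat_adj_psd_pow_mat_abs matrix_diff_rdistrib trace_sub)
  also have "trace (psd_pow (mat_abs (mat_adj w)) q ** w) = trace (psd_pow (mat_abs w) q ** w)"
    unfolding psd_pow_mat_abs_intertwine by (rule trace_mul_sym)
  finally show ?thesis by (simp add: inner_matrix_eq_trace)
qed

section \<open>Global solutions of autonomous ODEs\<close>

definition integral_from_0 :: "(real \<Rightarrow> 'a::banach) \<Rightarrow> real \<Rightarrow> 'a" where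
  "integral_from_0 g t = (if 0 \<le> t then integral {0..t} g else - integral {t..0} g)"

lemma integral_from_0_0 [simp]: "integral_from_0 g 0 = 0"
  by (simp add: integral_from_0_def)

lemma continuous_on_UNIV_integrable_on:
  fixes g :: "real \<Rightarrow> 'a::banach"
  shows "continuous_on UNIV g \<Longrightarrow> g integrable_on {a..b}"
  by (rule integrable_continuous_real) (rule continuous_on_subset, auto)

lemma integral_from_0_eq_integral_diff:
  fixes g :: "real \<Rightarrow> 'a::banach"
  assumes g: "continuous_on UNIV g" and a: "a \<le> 0" "a \<le> t"
  shows "integral_from_0 g t = integral {a..t} g - integral {a..0} g"
proof (cases "0 \<le> t")
  case True
  have "integral {a..0} g + integral {0..t} g = integral {a..t} g"
    using a True by (intro Henstock_Kurzweil_Integration.integral_combine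
        continuous_on_UNIV_integrable_on g)
  thus ?thesis using True by (simp add: integral_from_0_def algebra_simps)
next
  case False
  have "integral {a..t} g + integral {t..0} g = integral {a..0} g"
    using a False by (intro Henstock_Kurzweil_Integration.integral_combine
        continuous_on_UNIV_integrable_on g) auto
  thus ?thesis using False by (simp add: integral_from_0_def algebra_simps)
qed

lemma has_vector_derivative_integral_from_0:
  fixes g :: "real \<Rightarrow> 'a::banach"
  assumes g: "continuous_on UNIV g"
  shows "(integral_from_0 g has_vector_derivative g t) (at t)"
proof -
  define a where "a = - (\<bar>t\<bar> + 1)"
  have t: "t \<in> {a<..<\<bar>t\<bar> + 1}" by (auto simp: a_def)
  have "((\<lambda>u. integral {a..u} g) has_vector_derivative g t) (at t within {a..\<bar>t\<bar> + 1})"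
    using t by (intro integral_has_vector_derivative continuous_on_subset[OF g]) auto
  moreover have "at t within {a..\<bar>t\<bar> + 1} = at t"
    using t by (intro at_within_interior) auto
  ultimately have "((\<lambda>u. integral {a..u} g - integral {a..0} g) has_vector_derivative g t) (at t)"
    using has_vector_derivative_diff[OF _ has_vector_derivative_const] by fastforce
  thus ?thesis
    by (rule has_vector_derivative_transform_within_open[OF _ _ t])
       (use g in \<open>auto simp: a_def intro!: integral_from_0_eq_integral_diff[symmetric]\<close>)
qed

lemma continuous_on_integral_from_0:
  fixes g :: "real \<Rightarrow> 'a::banach"
  shows "continuous_on UNIV g \<Longrightarrow> continuous_on UNIV (integral_from_0 g)"
  by (metis continuous_at_imp_continuous_on has_vector_derivative_continuous
      has_vector_derivative_integral_from_0)

lemma integral_from_0_diff: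
  fixes g h :: "real \<Rightarrow> 'a::banach"
  assumes "continuous_on UNIV g" "continuous_on UNIV h"
  shows "integral_from_0 (\<lambda>s. g s - h s) t = integral_from_0 g t - integral_from_0 h t"
  using assms by (simp add: integral_from_0_def Henstock_Kurzweil_Integration.integral_diff
      continuous_on_UNIV_integrable_on)

lemma norm_integral_from_0_le_exp:
  fixes g :: "real \<Rightarrow> 'a::euclidean_space"
  assumes g: "continuous_on UNIV g" and c: "c > 0"
    and bound: "\<And>s. norm (g s) \<le> \<delta> * exp (c * \<bar>s\<bar>)"
  shows "norm (integral_from_0 g t) \<le> \<delta> * (exp (c * \<bar>t\<bar>) - 1) / c"
proof -
  \<comment> \<open>Between \<open>0\<close> and \<open>t\<close> we have \<open>\<bar>s\<bar> = \<sigma> s\<close>, which gives an explicit antiderivative.\<close>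
  define a b where "a = min 0 t" and "b = max 0 t"
  define \<sigma> :: real where "\<sigma> = (if 0 \<le> t then 1 else -1)"
  have ab: "{a..b} = (if 0 \<le> t then {0..t} else {t..0})" by (auto simp: a_def b_def)
  have "((\<lambda>s. \<delta> * exp (c * (\<sigma> * s))) has_integral
        ((\<lambda>s. \<sigma> * \<delta> / c * exp (c * (\<sigma> * s))) b - (\<lambda>s. \<sigma> * \<delta> / c * exp (c * (\<sigma> * s))) a)) {a..b}"
    using c unfolding a_def b_def \<sigma>_def
    by (intro fundamental_theorem_of_calculus)
       (auto intro!: derivative_eq_intros simp: has_real_derivative_iff_has_vector_derivative[symmetric])
  moreover have "(\<lambda>s. \<sigma> * \<delta> / c * exp (c * (\<sigma> * s))) b - (\<lambda>s. \<sigma> * \<delta> / c * exp (c * (\<sigma> * s))) a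
                 = \<delta> * (exp (c * \<bar>t\<bar>) - 1) / c"
    using c by (simp add: a_def b_def \<sigma>_def field_simps)
  moreover have "norm (g s) \<le> \<delta> * exp (c * (\<sigma> * s))" if "s \<in> {a..b}" for s
    using bound[of s] that by (auto simp: a_def b_def \<sigma>_def split: if_splits)
  ultimately have "norm (integral {a..b} g) \<le> \<delta> * (exp (c * \<bar>t\<bar>) - 1) / c"
    using Henstock_Kurzweil_Integration.integral_norm_bound_integral
          [OF continuous_on_UNIV_integrable_on[OF g] has_integral_integrable]
          integral_unique by metis
  thus ?thesis using ab by (simp add: integral_from_0_def split: if_splits)
qed

lemma norm_integral_from_0_lipschitz_diff:
  fixes G :: "'a::euclidean_space \<Rightarrow> 'a"
  assumes G: "K-lipschitz_on UNIV G" and c: "c > 0"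
    and u: "continuous_on UNIV u" and v: "continuous_on UNIV v"
    and uv: "\<And>s. norm (u s - v s) \<le> d * exp (c * \<bar>s\<bar>)"
  shows "norm (integral_from_0 (\<lambda>s. G (u s)) t - integral_from_0 (\<lambda>s. G (v s)) t)
         \<le> K * d * (exp (c * \<bar>t\<bar>) - 1) / c"
proof -
  have cG: "continuous_on UNIV (\<lambda>s. G (w s))" if "continuous_on UNIV w" for w
    using continuous_on_compose2[OF lipschitz_on_continuous_on[OF G] that] by simp
  have "norm (G (u s) - G (v s)) \<le> (K * d) * exp (c * \<bar>s\<bar>)" for s
    using lipschitz_on_normD[OF G, of "u s" "v s"] uv[of s] lipschitz_on_nonneg[OF G]
    by (auto simp: mult.assoc intro: order_trans mult_left_mono)
  hence "norm (integral_from_0 (\<lambda>s. G (u s) - G (v s)) t) \<le> K * d * (exp (c * \<bar>t\<bar>) - 1) / c"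
    using c by (intro norm_integral_from_0_le_exp continuous_intros cG u v)
  thus ?thesis by (simp add: integral_from_0_diff cG u v)
qed

definition weighted_picard :: "real \<Rightarrow> 'a \<Rightarrow> ('a \<Rightarrow> 'a) \<Rightarrow> (real \<Rightarrow> 'a) \<Rightarrow> real \<Rightarrow> 'a::banach"
  where "weighted_picard c w0 G h t = exp (- c * \<bar>t\<bar>) *\<^sub>R (w0 + integral_from_0 (\<lambda>s. G (h s)) t)"

lemma weighted_picard_in_bcontfun:
  fixes G :: "'a::euclidean_space \<Rightarrow> 'a"
  assumes G: "continuous_on UNIV G" and B: "\<And>x. norm (G x) \<le> B"
    and c: "c > 0" and h: "continuous_on UNIV h"
  shows "weighted_picard c w0 G h \<in> bcontfun"
proof (rule bcontfun_normI)
  have Gh: "continuous_on UNIV (\<lambda>s. G (h s))" using continuous_on_compose2[OF G h] by simp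
  thus "continuous_on UNIV (weighted_picard c w0 G h)"
    unfolding weighted_picard_def by (intro continuous_intros continuous_on_integral_from_0)
  fix t
  have B0: "B \<ge> 0" using B[of 0] norm_ge_zero order_trans by blast
  have "norm (integral_from_0 (\<lambda>s. G (h s)) t) \<le> B * (exp (c * \<bar>t\<bar>) - 1) / c"
    using B B0 c by (intro norm_integral_from_0_le_exp Gh) (auto intro: order_trans[OF _ mult_left_mono[of 1]])
  hence "norm (weighted_picard c w0 G h t) \<le> exp (- c * \<bar>t\<bar>) * (norm w0 + B * (exp (c * \<bar>t\<bar>) - 1) / c)"
    unfolding weighted_picard_def by (auto intro!: mult_left_mono order_trans[OF norm_triangle_ineq])
  also have "\<dots> = exp (- c * \<bar>t\<bar>) * norm w0 + B / c * (1 - exp (- c * \<bar>t\<bar>))"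
    using c by (simp add: exp_minus field_simps)
  also have "\<dots> \<le> 1 * norm w0 + B / c * 1"
    using c B0 by (intro add_mono mult_right_mono mult_left_mono) auto
  finally show "norm (weighted_picard c w0 G h t) \<le> norm w0 + B / c" by simp
qed

lemma norm_weighted_picard_diff_le:
  fixes G :: "'a::euclidean_space \<Rightarrow> 'a"
  assumes G: "K-lipschitz_on UNIV G" and c: "c > 0"
    and u: "continuous_on UNIV u" and v: "continuous_on UNIV v"
    and uv: "\<And>s. norm (u s - v s) \<le> d * exp (c * \<bar>s\<bar>)"
  shows "norm (weighted_picard c w0 G u t - weighted_picard c w0 G v t) \<le> K * d / c"
proof -
  have "K * d \<ge> 0"
    using lipschitz_on_nonneg[OF G] order_trans[OF norm_ge_zero uv[of 0]] by simp
  have "norm (weighted_picard c w0 G u t - weighted_picard c w0 G v t)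
        = exp (- c * \<bar>t\<bar>) * norm (integral_from_0 (\<lambda>s. G (u s)) t - integral_from_0 (\<lambda>s. G (v s)) t)"
    unfolding weighted_picard_def by (simp flip: scaleR_diff_right)
  also have "\<dots> \<le> exp (- c * \<bar>t\<bar>) * (K * d * (exp (c * \<bar>t\<bar>) - 1) / c)"
    by (intro mult_left_mono norm_integral_from_0_lipschitz_diff[OF G c u v uv]) simp
  also have "\<dots> = K * d / c * (1 - exp (- c * \<bar>t\<bar>))"
    using c by (simp add: exp_minus field_simps)
  also have "\<dots> \<le> K * d / c"
    using c \<open>K * d \<ge> 0\<close> by (intro mult_left_le) auto
  finally show ?thesis .
qed

text \<open>Picard iteration is a contraction for the weighted sup-norm
  \<open>sup\<^sub>t e\<^sup>-\<^sup>c\<^sup>\<bar>\<^sup>t\<^sup>\<bar> \<parallel>w t\<parallel>\<close> with \<open>c\<close> twice the Lipschitz constant, so the integral equation is solved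
  on all of \<open>\<real>\<close> at once.\<close>
lemma integral_equation_exuniq:
  fixes G :: "'a::euclidean_space \<Rightarrow> 'a"
  assumes lip: "K-lipschitz_on UNIV G" and bdd: "bounded (range G)"
  shows "\<exists>!w. continuous_on UNIV w \<and> (\<forall>t. w t = w0 + integral_from_0 (\<lambda>s. G (w s)) t)"
proof -
  define c where "c = 2 * (K + 1)"
  have c: "c > 0" using lipschitz_on_nonneg[OF lip] by (simp add: c_def)
  have lip': "(K + 1)-lipschitz_on UNIV G" using lip by (rule lipschitz_on_mono) auto
  obtain B where B: "\<And>x. norm (G x) \<le> B" using bdd by (auto simp: bounded_iff)
  define e where "e t = exp (c * \<bar>t\<bar>)" for t
  have e_inv: "exp (- c * \<bar>t\<bar>) *\<^sub>R e t *\<^sub>R x = x" for t and x :: 'a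
    by (simp add: e_def flip: exp_add)
  have cont_eu: "continuous_on UNIV (\<lambda>s. e s *\<^sub>R apply_bcontfun u s)" for u :: "real \<Rightarrow>\<^sub>C 'a"
    unfolding e_def by (intro continuous_intros continuous_on_apply_bcontfun)
  have T: "weighted_picard c w0 G h \<in> bcontfun" if "continuous_on UNIV h" for h
    by (rule weighted_picard_in_bcontfun[OF lipschitz_on_continuous_on[OF lip] B c that])
  define \<Psi> where "\<Psi> u = Bcontfun (weighted_picard c w0 G (\<lambda>s. e s *\<^sub>R apply_bcontfun u s))" for u
  have \<Psi>: "apply_bcontfun (\<Psi> u) = weighted_picard c w0 G (\<lambda>s. e s *\<^sub>R apply_bcontfun u s)" for u
    unfolding \<Psi>_def by (simp add: Bcontfun_inverse[OF T[OF cont_eu]])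
  have "dist (\<Psi> u) (\<Psi> v) \<le> 1/2 * dist u v" for u v
  proof (rule dist_bound)
    fix t
    have "norm (e s *\<^sub>R apply_bcontfun u s - e s *\<^sub>R apply_bcontfun v s) \<le> dist u v * exp (c * \<bar>s\<bar>)"
      for s
      using dist_bounded[of u s v] by (simp add: dist_norm e_def mult.commute flip: scaleR_diff_right)
    hence "dist (apply_bcontfun (\<Psi> u) t) (apply_bcontfun (\<Psi> v) t) \<le> (K + 1) * dist u v / c"
      unfolding \<Psi> dist_norm by (intro norm_weighted_picard_diff_le lip' c cont_eu)
    also have "(K + 1) * dist u v / c = 1/2 * dist u v"
      using lipschitz_on_nonneg[OF lip] by (simp add: c_def field_simps)
    finally show "dist (apply_bcontfun (\<Psi> u) t) (apply_bcontfun (\<Psi> v) t) \<le> 1/2 * dist u v" .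
  qed
  hence "\<exists>!u. \<Psi> u = u" by (intro banach_fix_type[of "1/2"]) auto
  then obtain u where fix_u: "\<Psi> u = u" and uniq_u: "\<And>v. \<Psi> v = v \<Longrightarrow> v = u"
    by blast
  show ?thesis
  proof (rule ex1I[of _ "\<lambda>t. e t *\<^sub>R apply_bcontfun u t"], intro conjI allI)
    show "continuous_on UNIV (\<lambda>t. e t *\<^sub>R apply_bcontfun u t)" by (rule cont_eu)
    fix t
    have "apply_bcontfun u t = weighted_picard c w0 G (\<lambda>s. e s *\<^sub>R apply_bcontfun u s) t"
      by (metis \<Psi> fix_u)
    thus "e t *\<^sub>R apply_bcontfun u t = w0 + integral_from_0 (\<lambda>s. G (e s *\<^sub>R apply_bcontfun u s)) t"
      by (simp add: weighted_picard_def e_def flip: exp_add)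
  next
    fix w assume "continuous_on UNIV w \<and> (\<forall>t. w t = w0 + integral_from_0 (\<lambda>s. G (w s)) t)"
    hence wc: "continuous_on UNIV w" and Tw: "weighted_picard c w0 G w t = exp (- c * \<bar>t\<bar>) *\<^sub>R w t" for t
      unfolding weighted_picard_def by metis+
    define uw where "uw = Bcontfun (weighted_picard c w0 G w)"
    have "e t *\<^sub>R apply_bcontfun uw t = w t" for t
      by (simp add: uw_def Bcontfun_inverse[OF T[OF wc]] Tw e_def flip: exp_add)
    hence euw: "(\<lambda>s. e s *\<^sub>R apply_bcontfun uw s) = w" by (simp add: fun_eq_iff)
    hence "\<Psi> uw = uw" unfolding \<Psi>_def by (simp add: uw_def)
    hence "uw = u" by (rule uniq_u)
    thus "w = (\<lambda>t. e t *\<^sub>R apply_bcontfun u t)" using euw by auto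
  qed
qed

lemma ode_iff_integral_equation:
  fixes G :: "'a::euclidean_space \<Rightarrow> 'a"
  assumes G: "continuous_on UNIV G"
  shows "(\<forall>t. (w has_vector_derivative G (w t)) (at t)) \<and> w 0 = w0 \<longleftrightarrow>
         continuous_on UNIV w \<and> (\<forall>t. w t = w0 + integral_from_0 (\<lambda>s. G (w s)) t)"
proof
  assume w: "(\<forall>t. (w has_vector_derivative G (w t)) (at t)) \<and> w 0 = w0"
  hence wc: "continuous_on UNIV w"
    by (metis continuous_at_imp_continuous_on has_vector_derivative_continuous)
  have "\<exists>k. \<forall>t\<in>UNIV. w t - integral_from_0 (\<lambda>s. G (w s)) t = k"
  proof (rule has_vector_derivative_zero_constant)
    fix t
    have "((\<lambda>t. w t - integral_from_0 (\<lambda>s. G (w s)) t) has_vector_derivative G (w t) - G (w t)) (at t)"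
      using w has_vector_derivative_integral_from_0[OF continuous_on_compose2[OF G wc]]
      by (intro derivative_intros) auto
    thus "((\<lambda>t. w t - integral_from_0 (\<lambda>s. G (w s)) t) has_vector_derivative 0) (at t within UNIV)"
      by simp
  qed auto
  then obtain k where k: "\<And>t. w t - integral_from_0 (\<lambda>s. G (w s)) t = k" by blast
  have "k = w0" using k[of 0] w by simp
  hence "w t = w0 + integral_from_0 (\<lambda>s. G (w s)) t" for t
    using k[of t] by (metis diff_add_cancel add.commute)
  with wc show "continuous_on UNIV w \<and> (\<forall>t. w t = w0 + integral_from_0 (\<lambda>s. G (w s)) t)"
    by blast
next
  assume "continuous_on UNIV w \<and> (\<forall>t. w t = w0 + integral_from_0 (\<lambda>s. G (w s)) t)"
  hence wc: "continuous_on UNIV w" and weq: "\<And>t. w t = w0 + integral_from_0 (\<lambda>s. G (w s)) t"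
    by blast+
  have "((\<lambda>t. w0 + integral_from_0 (\<lambda>s. G (w s)) t) has_vector_derivative G (w t)) (at t)" for t
    using has_vector_derivative_add[OF has_vector_derivative_const
        has_vector_derivative_integral_from_0[OF continuous_on_compose2[OF G wc]]]
    by simp
  moreover have "(\<lambda>t. w0 + integral_from_0 (\<lambda>s. G (w s)) t) = w" by (rule ext) (rule weq[symmetric])
  moreover have "w 0 = w0" by (subst weq) simp
  ultimately show "(\<forall>t. (w has_vector_derivative G (w t)) (at t)) \<and> w 0 = w0" by simp
qed

theorem lipschitz_bounded_ode_exuniq:
  fixes G :: "'a::euclidean_space \<Rightarrow> 'a"
  assumes "K-lipschitz_on UNIV G" and "bounded (range G)"
  shows "\<exists>!w. (\<forall>t. (w has_vector_derivative G (w t)) (at t)) \<and> w 0 = w0"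
  unfolding ode_iff_integral_equation[OF lipschitz_on_continuous_on[OF assms(1)]]
  by (rule integral_equation_exuniq[OF assms])

lemma norm_conserved_if_orthogonal:
  fixes w :: "real \<Rightarrow> 'a::real_inner"
  assumes w: "\<And>t. (w has_vector_derivative F (w t)) (at t)"
    and orth: "\<And>t. inner (w t) (F (w t)) = 0"
  shows "norm (w t) = norm (w 0)"
proof -
  have "\<exists>c. \<forall>t\<in>UNIV. inner (w t) (w t) = c"
  proof (rule has_derivative_zero_constant)
    fix t :: real
    have "((\<lambda>t. inner (w t) (w t)) has_derivative
           (\<lambda>h. inner (w t) (h *\<^sub>R F (w t)) + inner (h *\<^sub>R F (w t)) (w t))) (at t within UNIV)"
      using w[of t] unfolding has_vector_derivative_def by (intro has_derivative_inner) auto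
    thus "((\<lambda>t. inner (w t) (w t)) has_derivative (\<lambda>h. 0)) (at t within UNIV)"
      using orth[of t] by (simp add: inner_commute)
  qed auto
  then obtain c where "\<And>t. inner (w t) (w t) = c" by blast
  thus ?thesis by (metis norm_eq_sqrt_inner)
qed

lemma closest_point_cball_0:
  fixes x :: "'a::euclidean_space"
  assumes "0 \<le> R" "R < norm x"
  shows "closest_point (cball 0 R) x = (R / norm x) *\<^sub>R x"
proof (rule closest_point_unique[symmetric])
  have x: "norm x > 0" using assms by linarith
  have "dist x ((R / norm x) *\<^sub>R x) = norm ((1 - R / norm x) *\<^sub>R x)"
    by (simp add: dist_norm algebra_simps)
  also have "\<dots> = norm x - R"
    using assms x by (simp add: abs_of_nonneg field_simps)
  finally have dist: "dist x ((R / norm x) *\<^sub>R x) = norm x - R" .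
  show "\<forall>z\<in>cball 0 R. dist x ((R / norm x) *\<^sub>R x) \<le> dist x z"
  proof
    fix z :: 'a assume "z \<in> cball 0 R"
    hence "norm x - R \<le> dist x z" using norm_triangle_ineq2[of x z] by (simp add: dist_norm)
    thus "dist x ((R / norm x) *\<^sub>R x) \<le> dist x z" by (simp only: dist)
  qed
  show "(R / norm x) *\<^sub>R x \<in> cball 0 R" using assms x by simp
qed auto

text \<open>Letting \<open>x = \<epsilon> v \<rightarrow> 0\<close> in \<open>\<langle>v, F (\<epsilon> v)\<rangle> = 0\<close> gives \<open>\<langle>v, F 0\<rangle> = 0\<close> for every \<open>v\<close>.\<close>
lemma orthogonal_field_at_0:
  fixes F :: "'a::real_inner \<Rightarrow> 'a"
  assumes F: "isCont F 0" and orth: "\<And>x. inner x (F x) = 0"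
  shows "F 0 = 0"
proof -
  let ?v = "F 0"
  have "((\<lambda>\<epsilon>::real. inner ?v (F (\<epsilon> *\<^sub>R ?v))) \<longlongrightarrow> inner ?v (F 0)) (at_right 0)"
    by (intro tendsto_intros isCont_tendsto_compose[OF F] tendsto_eq_intros) auto
  moreover have "inner ?v (F (\<epsilon> *\<^sub>R ?v)) = 0" if "\<epsilon> > 0" for \<epsilon> :: real
    using orth[of "\<epsilon> *\<^sub>R ?v"] that by simp
  hence "eventually (\<lambda>\<epsilon>::real. inner ?v (F (\<epsilon> *\<^sub>R ?v)) = 0) (at_right 0)"
    by (auto intro: eventually_mono[OF eventually_at_right_less])
  hence "((\<lambda>\<epsilon>::real. inner ?v (F (\<epsilon> *\<^sub>R ?v))) \<longlongrightarrow> 0) (at_right 0)"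
    by (rule tendsto_eventually)
  ultimately have "inner ?v (F 0) = 0"
    by (rule tendsto_unique[OF trivial_limit_at_right_real])
  thus ?thesis by simp
qed

lemma continuous_on_if_lipschitz_on_cballs:
  fixes F :: "'a::euclidean_space \<Rightarrow> 'b::metric_space"
  assumes lip: "\<And>R. \<exists>L. L-lipschitz_on (cball 0 R) F"
  shows "continuous_on UNIV F"
proof (rule continuous_at_imp_continuous_on, rule ballI)
  fix x :: 'a
  obtain L where "L-lipschitz_on (cball 0 (norm x + 1)) F" using lip by blast
  hence "continuous_on (cball 0 (norm x + 1)) F" by (rule lipschitz_on_continuous_on)
  thus "isCont F x" by (rule continuous_on_interior) auto
qed

lemma continuous_on_vector_derivative_ode:
  assumes F: "continuous_on UNIV F" and w: "\<And>t. (w has_vector_derivative F (w t)) (at t)"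
  shows "continuous_on UNIV (\<lambda>t. vector_derivative w (at t))"
proof -
  have "continuous_on UNIV w"
    using w by (metis continuous_at_imp_continuous_on has_vector_derivative_continuous)
  moreover have "vector_derivative w (at t) = F (w t)" for t
    using w by (rule vector_derivative_at)
  ultimately show ?thesis using continuous_on_compose2[OF F] by auto
qed

lemma lipschitz_on_compose_closest_point_cball:
  fixes F :: "'a::euclidean_space \<Rightarrow> 'b::metric_space"
  assumes L: "L-lipschitz_on (cball 0 R) F" and R: "R \<ge> 0"
  shows "L-lipschitz_on UNIV (\<lambda>x. F (closest_point (cball 0 R) x))"
proof (rule lipschitz_onI)
  fix x y :: 'a
  have P: "closest_point (cball 0 R) z \<in> cball 0 R" for z :: 'a
    using R by (intro closest_point_in_set) auto
  have "dist (F (closest_point (cball 0 R) x)) (F (closest_point (cball 0 R) y))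
        \<le> L * dist (closest_point (cball 0 R) x) (closest_point (cball 0 R) y)"
    by (rule lipschitz_onD[OF L P P])
  also have "\<dots> \<le> L * dist x y"
    using R by (intro mult_left_mono closest_point_lipschitz lipschitz_on_nonneg[OF L]) auto
  finally show "dist (F (closest_point (cball 0 R) x)) (F (closest_point (cball 0 R) y)) \<le> L * dist x y" .
qed (rule lipschitz_on_nonneg[OF L])

lemma bounded_range_compose_closest_point_cball:
  fixes F :: "'a::euclidean_space \<Rightarrow> 'b::metric_space"
  assumes "continuous_on (cball 0 R) F" and R: "R \<ge> 0"
  shows "bounded (range (\<lambda>x. F (closest_point (cball 0 R) x)))"
proof -
  have "compact (F ` cball 0 R)" by (intro compact_continuous_image assms compact_cball)
  moreover have "closest_point (cball 0 R) x \<in> cball 0 R" for x :: 'a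
    using R by (intro closest_point_in_set) auto
  hence "range (\<lambda>x. F (closest_point (cball 0 R) x)) \<subseteq> F ` cball 0 R" by blast
  ultimately show ?thesis by (metis bounded_subset compact_imp_bounded)
qed

lemma inner_compose_closest_point_cball:
  fixes F :: "'a::euclidean_space \<Rightarrow> 'a"
  assumes orth: "\<And>x. inner x (F x) = 0" and F0: "F 0 = 0" and R: "R \<ge> 0"
  shows "inner x (F (closest_point (cball 0 R) x)) = 0"
proof (cases "norm x \<le> R")
  case True
  thus ?thesis by (simp add: closest_point_self orth)
next
  case False
  hence P: "closest_point (cball 0 R) x = (R / norm x) *\<^sub>R x"
    using R by (intro closest_point_cball_0) auto
  show ?thesis
  proof (cases "R = 0")
    case True
    show ?thesis unfolding P using True F0 by simp
  next
    case R0: False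
    have "inner ((R / norm x) *\<^sub>R x) (F ((R / norm x) *\<^sub>R x)) = 0" by (rule orth)
    hence "inner x (F ((R / norm x) *\<^sub>R x)) = 0" using R0 R False by auto
    thus ?thesis by (simp only: P)
  qed
qed

text \<open>A field orthogonal to the position vector keeps solutions on the sphere of radius \<open>\<parallel>w0\<parallel>\<close>,
  so only its restriction to that sphere matters: composing it with the metric projection onto
  the ball gives a globally Lipschitz, bounded field with the same solutions through \<open>w0\<close>.\<close>
theorem orthogonal_field_ode_exuniq:
  fixes F :: "'a::euclidean_space \<Rightarrow> 'a"
  assumes lip: "\<And>R. \<exists>L. L-lipschitz_on (cball 0 R) F" and orth: "\<And>x. inner x (F x) = 0"
  shows "\<exists>!w. (\<forall>t. (w has_vector_derivative F (w t)) (at t)) \<and> w 0 = w0"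
proof -
  define R where "R = norm w0"
  define G where "G x = F (closest_point (cball 0 R) x)" for x
  have R: "R \<ge> 0" by (simp add: R_def)
  obtain L where L: "L-lipschitz_on (cball 0 R) F" using lip by blast
  have "isCont F 0"
    using continuous_on_if_lipschitz_on_cballs[OF lip] by (simp add: continuous_on_eq_continuous_at)
  hence "F 0 = 0" using orth by (rule orthogonal_field_at_0)
  hence G_orth: "inner x (G x) = 0" for x
    unfolding G_def by (rule inner_compose_closest_point_cball[OF orth _ R])
  have on_sphere: "norm (v t) = R"
    if "\<And>t. (v has_vector_derivative H (v t)) (at t)" "\<And>x. inner x (H x) = 0" "v 0 = w0" for v H t
    using norm_conserved_if_orthogonal[of v H t] that by (simp add: R_def)
  have G_eq_F: "G x = F x" if "norm x = R" for x
    using that by (simp add: G_def closest_point_self)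
  have "(\<forall>t. (v has_vector_derivative G (v t)) (at t)) \<longleftrightarrow>
        (\<forall>t. (v has_vector_derivative F (v t)) (at t))" if v0: "v 0 = w0" for v
  proof
    assume "\<forall>t. (v has_vector_derivative G (v t)) (at t)"
    moreover have "G (v t) = F (v t)" for t
      using on_sphere[of v G, OF _ G_orth v0] calculation by (intro G_eq_F) blast
    ultimately show "\<forall>t. (v has_vector_derivative F (v t)) (at t)" by simp
  next
    assume "\<forall>t. (v has_vector_derivative F (v t)) (at t)"
    moreover have "G (v t) = F (v t)" for t
      using on_sphere[of v F, OF _ orth v0] calculation by (intro G_eq_F) blast
    ultimately show "\<forall>t. (v has_vector_derivative G (v t)) (at t)" by simp
  qed
  hence same_solutions:
    "(\<forall>t. (v has_vector_derivative G (v t)) (at t)) \<and> v 0 = w0 \<longleftrightarrow>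
     (\<forall>t. (v has_vector_derivative F (v t)) (at t)) \<and> v 0 = w0" for v
    by blast
  have "\<exists>!w. (\<forall>t. (w has_vector_derivative G (w t)) (at t)) \<and> w 0 = w0"
    unfolding G_def
    using lipschitz_bounded_ode_exuniq[OF lipschitz_on_compose_closest_point_cball[OF L R]
        bounded_range_compose_closest_point_cball[OF lipschitz_on_continuous_on[OF L] R]] .
  thus ?thesis unfolding same_solutions .
qed

lemma ham_field_lipschitz_on_cball:
  assumes "q \<ge> 1"
  shows "(2 * sqrt 2 * (q * R powr (q - 1)))-lipschitz_on (cball 0 R) (ham_field q)"
  using assms by (intro lipschitz_onI) (auto simp: dist_norm intro: ham_field_lipschitz)

theorem theorem2p3:
  fixes n :: nat and p q :: real and w0 :: "complex^'N^'N"
  assumes "n \<ge> 1" and "p = 2 * real n" and "q = p / (p - 1)"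
  shows "\<exists>!w :: real \<Rightarrow> complex^'N^'N.
           (\<forall>t. (w has_vector_derivative ham_field q (w t)) (at t)) \<and>
           continuous_on UNIV (\<lambda>t. vector_derivative w (at t)) \<and>
           w 0 = w0"
proof -
  have "p > 1" using assms(1,2) by simp
  hence q: "q \<ge> 1" unfolding assms(3) by (simp add: le_divide_eq)
  have lip: "\<exists>L. L-lipschitz_on (cball 0 R) (ham_field q :: complex^'N^'N \<Rightarrow> _)" for R
    using ham_field_lipschitz_on_cball[OF q] by blast
  have "continuous_on UNIV (\<lambda>t. vector_derivative w (at t))"
    if "\<forall>t. (w has_vector_derivative ham_field q (w t)) (at t)" for w :: "real \<Rightarrow> complex^'N^'N"
    using continuous_on_vector_derivative_ode[OF continuous_on_if_lipschitz_on_cballs[OF lip]] that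
    by blast
  hence "(\<forall>t. (w has_vector_derivative ham_field q (w t)) (at t)) \<and>
           continuous_on UNIV (\<lambda>t. vector_derivative w (at t)) \<and> w 0 = w0 \<longleftrightarrow>
         (\<forall>t. (w has_vector_derivative ham_field q (w t)) (at t)) \<and> w 0 = w0" for w
    by blast
  thus ?thesis using orthogonal_field_ode_exuniq[OF lip inner_ham_field, of w0] by simp
qed

end
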